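(* Let $P$ be a poset, let $\mathbf{JF}_P$ be the set of frame-generating join-specifications for $P$ and $\mathbf{JF}^+_P$ the set of maximal frame-generating join-specifications for $P$, both ordered by inclusion. (1) $\mathbf{JF}_P$ is a complete lattice (equivalently, as a thin category it is complete and cocomplete). Non-empty joins are given by unions, the top element is $\bigcup_{\mathcal{U}\in\mathbf{JF}_P}\mathcal{U}$ and the bottom element is $B_P$. (2) $\mathbf{JF}^+_P$ is a complete lattice (equivalently, complete and cocomplete). Non-empty meets are given by intersections, the top element is $\bigcup_{\mathcal{U}\in\mathbf{JF}_P}\mathcal{U}$ and the bottom element is $B_P^+$.
   Context: A join-specification for $P$ is a set $\mathcal{U}\subseteq\wp(P)$ such that $\bigvee S$ exists in $P$ for every $S\in\mathcal{U}$, and $\{p\}\in\mathcal{U}$ for every $p\in P$. A $\mathcal{U}$-ideal is a down-closed $C\subseteq P$ such that $\bigvee S\in C$ whenever $S\in\mathcal{U}$, $S\subseteq C$. $\mathcal{I}_{\mathcal{U}}$ is the complete lattice of $\mathcal{U}$-ideals ordered by inclusion; $\Gamma_{\mathcal{U}}(S)$ is the smallest $\mathcal{U}$-ideal containing $S$. $\mathcal{U}^+=\{S\subseteq P:\bigvee S\text{ exists and }\bigvee S\in\Gamma_{\mathcal{U}}(S)\}$; $\mathcal{U}$ is maximal if $\mathcal{U}=\mathcal{U}^+$; $\mathcal{U}$ is frame-generating if $\mathcal{I}_{\mathcal{U}}$ is a frame. $B_P$ is the set of all singleton subsets of $P$, and $B_P^+=(B_P)^+$. *)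

theory Defs
  imports Main
begin

text \<open>The poset P is the carrier of a type of class order (P = UNIV).\<close>

definition is_join :: "'a::order set \<Rightarrow> 'a \<Rightarrow> bool" where
  "is_join S x \<longleftrightarrow> (\<forall>s\<in>S. s \<le> x) \<and> (\<forall>y. (\<forall>s\<in>S. s \<le> y) \<longrightarrow> x \<le> y)"

definition has_join :: "'a::order set \<Rightarrow> bool" where
  "has_join S \<longleftrightarrow> (\<exists>x. is_join S x)"

definition join :: "'a::order set \<Rightarrow> 'a" where
  "join S = (THE x. is_join S x)"

definition join_spec :: "'a::order set set \<Rightarrow> bool" where
  "join_spec U \<longleftrightarrow> (\<forall>S\<in>U. has_join S) \<and> (\<forall>p. {p} \<in> U)"

definition U_ideal :: "'a::order set set \<Rightarrow> 'a set \<Rightarrow> bool" where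
  "U_ideal U C \<longleftrightarrow> (\<forall>x y. x \<in> C \<longrightarrow> y \<le> x \<longrightarrow> y \<in> C)
                   \<and> (\<forall>S\<in>U. S \<subseteq> C \<longrightarrow> join S \<in> C)"

definition Gamma :: "'a::order set set \<Rightarrow> 'a set \<Rightarrow> 'a set" where
  "Gamma U S = \<Inter>{C. U_ideal U C \<and> S \<subseteq> C}"

definition U_plus :: "'a::order set set \<Rightarrow> 'a set set" where
  "U_plus U = {S. has_join S \<and> join S \<in> Gamma U S}"

definition maximal_spec :: "'a::order set set \<Rightarrow> bool" where
  "maximal_spec U \<longleftrightarrow> U = U_plus U"

text \<open>The lattice of U-ideals (meets = intersections, joins = Gamma of unions)
  is a frame: binary meets distribute over arbitrary joins.\<close>
definition frame_generating :: "'a::order set set \<Rightarrow> bool" where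
  "frame_generating U \<longleftrightarrow>
     (\<forall>A F. U_ideal U A \<and> (\<forall>B\<in>F. U_ideal U B) \<longrightarrow>
        A \<inter> Gamma U (\<Union>F) = Gamma U (\<Union>B\<in>F. A \<inter> B))"

definition B_P :: "'a::order set set" where
  "B_P = {S. \<exists>p. S = {p}}"

definition JF :: "'a::order set set set" where
  "JF = {U. join_spec U \<and> frame_generating U}"

definition JF_plus :: "'a::order set set set" where
  "JF_plus = {U. join_spec U \<and> frame_generating U \<and> maximal_spec U}"

definition complete_lattice_incl :: "'b set set \<Rightarrow> bool" where
  "complete_lattice_incl A \<longleftrightarrow>
     (\<forall>F\<subseteq>A. \<exists>x\<in>A. (\<forall>y\<in>F. y \<subseteq> x) \<and> (\<forall>z\<in>A. (\<forall>y\<in>F. y \<subseteq> z) \<longrightarrow> x \<subseteq> z))"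

end

theory Submission
  imports Defs
begin

(* For a join-specification U the lattice of U-ideals is a frame iff U is distributive: whenever
   S \<in> U and p \<le> join S, p lies in the U-ideal generated by the downset of p meeting the downset
   of S. Distributivity passes to unions of join-specifications, so JF is closed under non-empty
   unions and has least element B_P, hence is complete. If U is moreover maximal, that generating
   set has join p and therefore belongs to U itself; this is what lets distributivity and
   maximality pass to non-empty intersections, so that JF_plus, whose top is the union of JF, is
   complete as well. *)

lemma complete_lattice_incl_if_Union_closed:
  assumes "b \<in> A" and "\<And>y. y \<in> A \<Longrightarrow> b \<subseteq> y"
    and "\<And>F. F \<subseteq> A \<Longrightarrow> F \<noteq> {} \<Longrightarrow> \<Union>F \<in> A"
  shows "complete_lattice_incl A"
  unfolding complete_lattice_incl_def
proof (intro allI impI)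
  fix F assume "F \<subseteq> A"
  then have "\<Union>(insert b F) \<in> A" using assms(1) assms(3)[of "insert b F"] by simp
  moreover have "\<Union>(insert b F) \<subseteq> z" if "z \<in> A" "\<forall>y\<in>F. y \<subseteq> z" for z
    using assms(2) that by blast
  ultimately show "\<exists>x\<in>A. (\<forall>y\<in>F. y \<subseteq> x) \<and> (\<forall>z\<in>A. (\<forall>y\<in>F. y \<subseteq> z) \<longrightarrow> x \<subseteq> z)"
    by (intro bexI[of _ "\<Union>(insert b F)"] conjI ballI impI) auto
qed

lemma complete_lattice_incl_if_Inter_closed:
  assumes "t \<in> A" and "\<And>y. y \<in> A \<Longrightarrow> y \<subseteq> t"
    and "\<And>F. F \<subseteq> A \<Longrightarrow> F \<noteq> {} \<Longrightarrow> \<Inter>F \<in> A"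
  shows "complete_lattice_incl A"
  unfolding complete_lattice_incl_def
proof (intro allI impI)
  fix F assume "F \<subseteq> A"
  define Z where "Z = {z \<in> A. \<forall>y\<in>F. y \<subseteq> z}"
  have "t \<in> Z" using assms(1,2) \<open>F \<subseteq> A\<close> unfolding Z_def by blast
  then have "\<Inter>Z \<in> A" using assms(3)[of Z] unfolding Z_def by blast
  moreover have "\<forall>y\<in>F. y \<subseteq> \<Inter>Z" unfolding Z_def by blast
  moreover have "\<forall>z\<in>A. (\<forall>y\<in>F. y \<subseteq> z) \<longrightarrow> \<Inter>Z \<subseteq> z" unfolding Z_def by blast
  ultimately show "\<exists>x\<in>A. (\<forall>y\<in>F. y \<subseteq> x) \<and> (\<forall>z\<in>A. (\<forall>y\<in>F. y \<subseteq> z) \<longrightarrow> x \<subseteq> z)"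
    by (intro bexI[of _ "\<Inter>Z"]) simp_all
qed

lemma is_join_unique: "is_join S x \<Longrightarrow> is_join S y \<Longrightarrow> x = y"
  unfolding is_join_def by (meson order_antisym)

lemma join_eqI: "is_join S x \<Longrightarrow> join S = x"
  unfolding join_def using is_join_unique by blast

lemma is_join_join: "has_join S \<Longrightarrow> is_join S (join S)"
  unfolding has_join_def using join_eqI by metis

lemma is_join_singleton: "is_join {p} p"
  unfolding is_join_def by simp

lemma U_ideal_downward: "U_ideal U C \<Longrightarrow> x \<in> C \<Longrightarrow> y \<le> x \<Longrightarrow> y \<in> C"
  unfolding U_ideal_def by blast

lemma U_ideal_join: "U_ideal U C \<Longrightarrow> S \<in> U \<Longrightarrow> S \<subseteq> C \<Longrightarrow> join S \<in> C"
  unfolding U_ideal_def by blast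

lemma U_ideal_antimono: "U \<subseteq> V \<Longrightarrow> U_ideal V C \<Longrightarrow> U_ideal U C"
  unfolding U_ideal_def by blast

lemma U_ideal_atMost: "join_spec U \<Longrightarrow> U_ideal U {..p}"
  unfolding U_ideal_def join_spec_def
  using is_join_join unfolding is_join_def by fastforce

lemma U_ideal_Gamma: "U_ideal U (Gamma U S)"
  unfolding U_ideal_def Gamma_def by blast

lemma subset_Gamma: "S \<subseteq> Gamma U S"
  unfolding Gamma_def by blast

lemma Gamma_least: "U_ideal U C \<Longrightarrow> S \<subseteq> C \<Longrightarrow> Gamma U S \<subseteq> C"
  unfolding Gamma_def by blast

lemma Gamma_mono: "S \<subseteq> T \<Longrightarrow> Gamma U S \<subseteq> Gamma U T"
  unfolding Gamma_def by blast

lemma Gamma_mono_spec: "U \<subseteq> V \<Longrightarrow> Gamma U S \<subseteq> Gamma V S"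
  unfolding Gamma_def using U_ideal_antimono by blast

lemma join_in_Gamma: "S \<in> U \<Longrightarrow> join S \<in> Gamma U S"
  using U_ideal_join[OF U_ideal_Gamma _ subset_Gamma] .

lemma Gamma_subset_atMost: "join_spec U \<Longrightarrow> \<forall>d\<in>D. d \<le> p \<Longrightarrow> Gamma U D \<subseteq> {..p}"
  using Gamma_least[OF U_ideal_atMost] by blast

section \<open>Frame-generating join-specifications are the distributive ones\<close>

definition downset_meet :: "'a::order \<Rightarrow> 'a set \<Rightarrow> 'a set" where
  "downset_meet p S = {..p} \<inter> (\<Union>s\<in>S. {..s})"

definition distributive_spec :: "'a::order set set \<Rightarrow> bool" where
  "distributive_spec U \<longleftrightarrow> (\<forall>S\<in>U. \<forall>p. p \<le> join S \<longrightarrow> p \<in> Gamma U (downset_meet p S))"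

lemma frame_generatingD:
  "frame_generating U \<Longrightarrow> U_ideal U A \<Longrightarrow> \<forall>B\<in>F. U_ideal U B
    \<Longrightarrow> A \<inter> Gamma U (\<Union>F) = Gamma U (\<Union>B\<in>F. A \<inter> B)"
  unfolding frame_generating_def by blast

lemma frame_generating_imp_distributive:
  assumes U: "join_spec U" and "frame_generating U"
  shows "distributive_spec U"
  unfolding distributive_spec_def
proof (intro ballI allI impI)
  fix S p assume S: "S \<in> U" and p: "p \<le> join S"
  let ?F = "(\<lambda>s. {..s}) ` S"
  have "S \<subseteq> Gamma U (\<Union>?F)" using subset_Gamma[of "\<Union>?F" U] by auto
  then have "join S \<in> Gamma U (\<Union>?F)" by (rule U_ideal_join[OF U_ideal_Gamma S])
  then have "p \<in> {..p} \<inter> Gamma U (\<Union>?F)" using U_ideal_downward[OF U_ideal_Gamma _ p] by simp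
  also have "\<dots> = Gamma U (\<Union>B\<in>?F. {..p} \<inter> B)"
    by (rule frame_generatingD[OF \<open>frame_generating U\<close> U_ideal_atMost[OF U]])
      (simp add: U_ideal_atMost[OF U])
  also have "(\<Union>B\<in>?F. {..p} \<inter> B) = downset_meet p S"
    unfolding downset_meet_def by blast
  finally show "p \<in> Gamma U (downset_meet p S)" .
qed

text \<open>The Heyting implication A \<Rightarrow> G of the lattice of U-ideals, computed pointwise.\<close>

lemma U_ideal_implication:
  assumes "distributive_spec U" and A: "U_ideal U A" and G: "U_ideal U G"
  shows "U_ideal U {x. {..x} \<inter> A \<subseteq> G}"
  unfolding U_ideal_def
proof (intro conjI allI impI ballI)
  fix x y :: 'a assume "x \<in> {x. {..x} \<inter> A \<subseteq> G}" "y \<le> x"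
  then show "y \<in> {x. {..x} \<inter> A \<subseteq> G}" by auto
next
  fix S assume S: "S \<in> U" and SC: "S \<subseteq> {x. {..x} \<inter> A \<subseteq> G}"
  have "p \<in> G" if p: "p \<le> join S" "p \<in> A" for p
  proof -
    have "downset_meet p S \<subseteq> G"
      using SC U_ideal_downward[OF A \<open>p \<in> A\<close>] unfolding downset_meet_def by blast
    then have "Gamma U (downset_meet p S) \<subseteq> G" by (rule Gamma_least[OF G])
    then show "p \<in> G" using assms(1) S p unfolding distributive_spec_def by blast
  qed
  then show "join S \<in> {x. {..x} \<inter> A \<subseteq> G}" by auto
qed

lemma distributive_imp_frame_generating:
  assumes "distributive_spec U"
  shows "frame_generating U"
  unfolding frame_generating_def
proof (intro allI impI)
  fix A F assume "U_ideal U A \<and> (\<forall>B\<in>F. U_ideal U B)"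
  then have A: "U_ideal U A" and F: "\<forall>B\<in>F. U_ideal U B" by auto
  define G where "G = Gamma U (\<Union>B\<in>F. A \<inter> B)"
  have G: "U_ideal U G" unfolding G_def by (rule U_ideal_Gamma)
  have "G \<subseteq> A" unfolding G_def by (rule Gamma_least[OF A]) blast
  moreover have "G \<subseteq> Gamma U (\<Union>F)" unfolding G_def by (rule Gamma_mono) blast
  moreover have "\<Union>F \<subseteq> {x. {..x} \<inter> A \<subseteq> G}"
  proof (rule subsetI, rule CollectI)
    fix x assume "x \<in> \<Union>F"
    then obtain B where "B \<in> F" "x \<in> B" by blast
    then have "{..x} \<inter> A \<subseteq> (\<Union>B\<in>F. A \<inter> B)" using F U_ideal_downward by fastforce
    then show "{..x} \<inter> A \<subseteq> G" unfolding G_def using subset_Gamma by blast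
  qed
  then have "Gamma U (\<Union>F) \<subseteq> {x. {..x} \<inter> A \<subseteq> G}"
    by (rule Gamma_least[OF U_ideal_implication[OF assms A G]])
  then have "A \<inter> Gamma U (\<Union>F) \<subseteq> G" by auto
  ultimately show "A \<inter> Gamma U (\<Union>F) = G" by blast
qed

lemma frame_generating_iff_distributive:
  "join_spec U \<Longrightarrow> frame_generating U \<longleftrightarrow> distributive_spec U"
  using frame_generating_imp_distributive distributive_imp_frame_generating by blast

lemma JF_iff_distributive: "U \<in> JF \<longleftrightarrow> join_spec U \<and> distributive_spec U"
  unfolding JF_def using frame_generating_iff_distributive by blast

lemma Union_in_JF:
  assumes "F \<subseteq> JF" "F \<noteq> {}"
  shows "\<Union>F \<in> JF"
proof -
  have "join_spec (\<Union>F)" using assms unfolding JF_def join_spec_def by blast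
  moreover have "distributive_spec (\<Union>F)"
    unfolding distributive_spec_def
  proof (intro ballI allI impI)
    fix S p assume "S \<in> \<Union>F" "p \<le> join S"
    then obtain U where U: "U \<in> F" "S \<in> U" by blast
    then have "distributive_spec U" using assms(1) JF_iff_distributive by blast
    then have "p \<in> Gamma U (downset_meet p S)"
      using U(2) \<open>p \<le> join S\<close> unfolding distributive_spec_def by blast
    then show "p \<in> Gamma (\<Union>F) (downset_meet p S)" using Gamma_mono_spec[of U "\<Union>F"] U by blast
  qed
  ultimately show ?thesis unfolding JF_iff_distributive by blast
qed

lemma B_P_subset: "join_spec U \<Longrightarrow> B_P \<subseteq> U"
  unfolding join_spec_def B_P_def by blast

lemma B_P_in_JF: "(B_P :: 'a::order set set) \<in> JF"
proof -
  have "join_spec (B_P :: 'a set set)"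
    unfolding join_spec_def B_P_def has_join_def using is_join_singleton by blast
  moreover have "distributive_spec (B_P :: 'a set set)"
    unfolding distributive_spec_def
  proof (intro ballI allI impI)
    fix S p assume "S \<in> B_P" "p \<le> join S"
    then obtain r where "S = {r}" unfolding B_P_def by blast
    moreover have "join {r} = r" by (rule join_eqI[OF is_join_singleton])
    ultimately have "p \<in> downset_meet p S"
      using \<open>p \<le> join S\<close> unfolding downset_meet_def by simp
    then show "p \<in> Gamma B_P (downset_meet p S)" using subset_Gamma by blast
  qed
  ultimately show ?thesis unfolding JF_iff_distributive by blast
qed

lemma Union_JF_in_JF: "\<Union>JF \<in> JF"
  using Union_in_JF[of JF] B_P_in_JF by blast

lemma subset_U_plus: "join_spec U \<Longrightarrow> U \<subseteq> U_plus U"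
  unfolding join_spec_def U_plus_def using join_in_Gamma by blast

lemma U_plus_mono: "U \<subseteq> V \<Longrightarrow> U_plus U \<subseteq> U_plus V"
  unfolding U_plus_def using Gamma_mono_spec by blast

lemma U_ideal_U_plus_iff:
  assumes "join_spec U" shows "U_ideal (U_plus U) C \<longleftrightarrow> U_ideal U C"
proof
  show "U_ideal (U_plus U) C \<Longrightarrow> U_ideal U C"
    by (rule U_ideal_antimono[OF subset_U_plus[OF assms]])
next
  assume C: "U_ideal U C"
  have "join S \<in> C" if "S \<in> U_plus U" "S \<subseteq> C" for S
    using that Gamma_least[OF C] unfolding U_plus_def by blast
  with C show "U_ideal (U_plus U) C" unfolding U_ideal_def by blast
qed

lemma Gamma_U_plus: "join_spec U \<Longrightarrow> Gamma (U_plus U) = Gamma U"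
  unfolding Gamma_def by (simp add: U_ideal_U_plus_iff)

lemma join_spec_U_plus: "join_spec U \<Longrightarrow> join_spec (U_plus U)"
  using subset_U_plus unfolding join_spec_def U_plus_def by blast

lemma maximal_spec_U_plus:
  assumes "join_spec U" shows "maximal_spec (U_plus U)"
  unfolding maximal_spec_def U_plus_def[of "U_plus U"] Gamma_U_plus[OF assms]
  by (simp add: U_plus_def)

lemma maximal_spec_iff_U_plus_subset: "join_spec U \<Longrightarrow> maximal_spec U \<longleftrightarrow> U_plus U \<subseteq> U"
  unfolding maximal_spec_def using subset_U_plus by blast

lemma frame_generating_U_plus_iff:
  "join_spec U \<Longrightarrow> frame_generating (U_plus U) \<longleftrightarrow> frame_generating U"
  unfolding frame_generating_def by (simp add: Gamma_U_plus U_ideal_U_plus_iff)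

lemma U_plus_in_JF_plus: "U \<in> JF \<Longrightarrow> U_plus U \<in> JF_plus"
  unfolding JF_def JF_plus_def
  using join_spec_U_plus frame_generating_U_plus_iff maximal_spec_U_plus by blast

lemma JF_plus_subset_JF: "JF_plus \<subseteq> JF"
  unfolding JF_def JF_plus_def by blast

lemma U_plus_JF_plus: "U \<in> JF_plus \<Longrightarrow> U_plus U = U"
  unfolding JF_plus_def maximal_spec_def by auto

lemma is_join_downset_meet:
  assumes "join_spec U" "distributive_spec U" "S \<in> U" "p \<le> join S"
  shows "is_join (downset_meet p S) p"
  unfolding is_join_def
proof (intro conjI allI impI)
  show "\<forall>s\<in>downset_meet p S. s \<le> p" unfolding downset_meet_def by blast
  fix y assume "\<forall>s\<in>downset_meet p S. s \<le> y"
  then have "Gamma U (downset_meet p S) \<subseteq> {..y}" by (rule Gamma_subset_atMost[OF assms(1)])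
  then show "p \<le> y" using assms(2-4) unfolding distributive_spec_def by blast
qed

lemma downset_meet_in_U_plus:
  assumes "join_spec U" "distributive_spec U" "S \<in> U" "p \<le> join S"
  shows "downset_meet p S \<in> U_plus U"
  using assms is_join_downset_meet[OF assms] join_eqI[OF is_join_downset_meet[OF assms]]
  unfolding U_plus_def has_join_def distributive_spec_def by auto

lemma Inter_in_JF_plus:
  assumes F: "F \<subseteq> JF_plus" "F \<noteq> {}"
  shows "\<Inter>F \<in> JF_plus"
proof -
  have js: "join_spec U" and dist: "distributive_spec U" and max: "U_plus U = U" if "U \<in> F" for U
    using that F(1) JF_plus_subset_JF JF_iff_distributive U_plus_JF_plus by blast+
  obtain U0 where "U0 \<in> F" using F(2) by blast
  have js_Inter: "join_spec (\<Inter>F)"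
    using js \<open>U0 \<in> F\<close> unfolding join_spec_def by blast
  have "distributive_spec (\<Inter>F)"
    unfolding distributive_spec_def
  proof (intro ballI allI impI)
    fix S p assume S: "S \<in> \<Inter>F" and p: "p \<le> join S"
    have "downset_meet p S \<in> U" if "U \<in> F" for U
      using downset_meet_in_U_plus[OF js dist _ p] max S that by blast
    then have "join (downset_meet p S) \<in> Gamma (\<Inter>F) (downset_meet p S)"
      by (intro join_in_Gamma InterI)
    moreover have "join (downset_meet p S) = p"
      using \<open>U0 \<in> F\<close> S by (intro join_eqI is_join_downset_meet[OF js dist _ p]) blast+
    ultimately show "p \<in> Gamma (\<Inter>F) (downset_meet p S)" by simp
  qed
  moreover have "U_plus (\<Inter>F) \<subseteq> \<Inter>F"
    using U_plus_mono[of "\<Inter>F"] max by blast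
  ultimately show ?thesis
    using js_Inter maximal_spec_iff_U_plus_subset distributive_imp_frame_generating
    unfolding JF_plus_def by blast
qed

lemma Union_JF_in_JF_plus: "\<Union>JF \<in> JF_plus"
proof -
  have js: "join_spec (\<Union>JF)" using Union_JF_in_JF unfolding JF_def by blast
  have "U_plus (\<Union>JF) \<in> JF"
    using U_plus_in_JF_plus[OF Union_JF_in_JF] JF_plus_subset_JF by blast
  then have "maximal_spec (\<Union>JF)"
    using maximal_spec_iff_U_plus_subset[OF js] by blast
  then show ?thesis using Union_JF_in_JF unfolding JF_def JF_plus_def by blast
qed

lemma U_plus_B_P_subset:
  assumes "U \<in> JF_plus" shows "U_plus B_P \<subseteq> U"
proof -
  have "B_P \<subseteq> U" using assms B_P_subset unfolding JF_plus_def by blast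
  then have "U_plus B_P \<subseteq> U_plus U" by (rule U_plus_mono)
  then show ?thesis using U_plus_JF_plus[OF assms] by simp
qed

theorem theorem5p5:
  shows "complete_lattice_incl (JF :: 'a::order set set set)
       \<and> (\<forall>F. F \<subseteq> (JF :: 'a set set set) \<and> F \<noteq> {} \<longrightarrow> \<Union>F \<in> JF)
       \<and> \<Union>(JF :: 'a set set set) \<in> JF \<and> (\<forall>U\<in>(JF :: 'a set set set). U \<subseteq> \<Union>JF)
       \<and> (B_P :: 'a set set) \<in> JF \<and> (\<forall>U\<in>(JF :: 'a set set set). B_P \<subseteq> U)
       \<and> complete_lattice_incl (JF_plus :: 'a set set set)
       \<and> (\<forall>F. F \<subseteq> (JF_plus :: 'a set set set) \<and> F \<noteq> {} \<longrightarrow> \<Inter>F \<in> JF_plus)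
       \<and> \<Union>(JF :: 'a set set set) \<in> JF_plus \<and> (\<forall>U\<in>(JF_plus :: 'a set set set). U \<subseteq> \<Union>JF)
       \<and> U_plus (B_P :: 'a set set) \<in> JF_plus
       \<and> (\<forall>U\<in>(JF_plus :: 'a set set set). U_plus B_P \<subseteq> U)"
proof -
  have B_P_least: "B_P \<subseteq> U" if "U \<in> JF" for U :: "'a set set"
    using that B_P_subset unfolding JF_def by blast
  have JF_plus_below_top: "U \<subseteq> \<Union>JF" if "U \<in> JF_plus" for U :: "'a set set"
    using that JF_plus_subset_JF by blast
  have "complete_lattice_incl (JF :: 'a set set set)"
    by (rule complete_lattice_incl_if_Union_closed[OF B_P_in_JF B_P_least Union_in_JF])
  moreover have "complete_lattice_incl (JF_plus :: 'a set set set)"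
    by (rule complete_lattice_incl_if_Inter_closed[OF Union_JF_in_JF_plus JF_plus_below_top
          Inter_in_JF_plus])
  ultimately show ?thesis
    by (simp add: Union_in_JF Union_JF_in_JF B_P_in_JF B_P_least Inter_in_JF_plus
        Union_JF_in_JF_plus JF_plus_below_top U_plus_in_JF_plus U_plus_B_P_subset Union_upper)
qed

end
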